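(* If $X$ is a homogeneous ordered compactum, then $\chi_K Nt(X)=\omega$.
   Context: An ordered compactum is a compact space whose topology is the order topology of a linear order. Families of open sets are ordered by inclusion; a family is $\kappa^{\mathrm{op}}$-like if no member is contained in $\kappa$-many members. For $E\subseteq X$, $\chi Nt(E,X)$ is the least $\kappa\geq\omega$ such that $E$ has a $\kappa^{\mathrm{op}}$-like neighborhood base (family of open sets containing $E$ such that every open set containing $E$ contains a member); $\chi_K Nt(X)$ is the supremum of $\chi Nt(K,X)$ over compact $K\subseteq X$. *)

theory Defs
  imports "HOL-Analysis.Analysis"
begin

text \<open>An ordered compactum is modelled as a type of class linorder_topology
  (topology = order topology of a linear order) whose universe is compact.\<close>

definition homogeneous_space :: "'a::topological_space itself \<Rightarrow> bool" where
  "homogeneous_space t \<longleftrightarrow>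
     (\<forall>x y. \<exists>h k. homeomorphism (UNIV::'a set) (UNIV::'a set) h k \<and> h x = y)"

definition nbhd_base :: "'a::topological_space set \<Rightarrow> 'a set set \<Rightarrow> bool" where
  "nbhd_base E F \<longleftrightarrow> (\<forall>U\<in>F. open U \<and> E \<subseteq> U) \<and>
     (\<forall>W. open W \<and> E \<subseteq> W \<longrightarrow> (\<exists>U\<in>F. U \<subseteq> W))"

text \<open>A family F is kappa-op-like (kappa given as a cardinal, i.e. a well-order
  relation): no member is contained in kappa-many members.\<close>
definition op_like :: "'b rel \<Rightarrow> 'a set set \<Rightarrow> bool" where
  "op_like \<kappa> F \<longleftrightarrow> (\<forall>U\<in>F. (\<kappa>, card_of {V\<in>F. U \<subseteq> V}) \<notin> ordLeq)"

text \<open>chiNt(E,X) = omega iff E has an omega-op-like neighborhood base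
  (omega is the least admissible value); hence chi_K Nt(X) = omega iff every
  compact K has an omega-op-like neighborhood base.\<close>
definition chiNt_omega :: "'a::topological_space set \<Rightarrow> bool" where
  "chiNt_omega E \<longleftrightarrow> (\<exists>F. nbhd_base E F \<and> op_like natLeq F)"

definition chiK_Nt_omega :: "'a::topological_space itself \<Rightarrow> bool" where
  "chiK_Nt_omega t \<longleftrightarrow> (\<forall>K::'a set. compact K \<longrightarrow> chiNt_omega K)"

end

theory Submission
  imports Defs
begin

text \<open>A homogeneous ordered compactum is first countable. In the infinite case the least
  point is not isolated, so there is a strictly decreasing sequence; its limit \<open>y\<close> is approached
  from above, and moving \<open>y\<close> to the least point by a homeomorphism yields a countable decreasing
  base there, which homeomorphisms carry to every point.
  Given a compact \<open>K\<close>, its complement splits into order-convex open gaps, each with at most two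
  boundary points, all lying in \<open>K\<close>. Removing from the closures of finitely many gaps the
  \<open>n\<close>-th basic neighbourhoods of their boundary points leaves closed sets whose complements form
  a neighbourhood base of \<open>K\<close>; a member of this base determined by \<open>(\<G>, n)\<close> is contained only
  in members determined by subsets of \<open>\<G>\<close> and levels at most \<open>n\<close>, so only in finitely many.\<close>

definition decseq_nhds_base :: "(nat \<Rightarrow> 'a::topological_space set) \<Rightarrow> 'a \<Rightarrow> bool" where
  "decseq_nhds_base B p \<longleftrightarrow> decseq B \<and> (\<forall>n. open (B n) \<and> p \<in> B n) \<and>
     (\<forall>W. open W \<and> p \<in> W \<longrightarrow> (\<exists>n. B n \<subseteq> W))"

lemma decseq_nhds_baseD:
  assumes "decseq_nhds_base B p"
  shows "decseq B" "open (B n)" "p \<in> B n" "open W \<Longrightarrow> p \<in> W \<Longrightarrow> \<exists>n. B n \<subseteq> W"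
  using assms by (auto simp: decseq_nhds_base_def)

lemma decseq_nhds_base_homeomorphism_image:
  assumes hk: "homeomorphism UNIV UNIV h k" and B: "decseq_nhds_base B p"
  shows "decseq_nhds_base (\<lambda>n. h ` B n) (h p)"
  unfolding decseq_nhds_base_def
proof (intro conjI allI impI)
  show "decseq (\<lambda>n. h ` B n)"
    using B by (auto simp: decseq_nhds_base_def decseq_def intro: image_mono)
  fix n
  show "open (h ` B n)"
    using homeomorphism_imp_open_map[OF hk, of "B n"] B by (simp add: decseq_nhds_base_def)
  show "h p \<in> h ` B n"
    using B by (simp add: decseq_nhds_base_def)
next
  fix W assume W: "open W \<and> h p \<in> W"
  have "continuous_on UNIV h" using hk by (simp add: homeomorphism_def)
  then have "open (h -` W)" using W by (simp add: continuous_on_open_vimage)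
  then obtain n where "B n \<subseteq> h -` W" using B W by (auto simp: decseq_nhds_base_def)
  then show "\<exists>n. h ` B n \<subseteq> W" by blast
qed

lemma homogeneous_decseq_nhds_base:
  assumes hom: "homogeneous_space TYPE('a::topological_space)"
    and "decseq_nhds_base B (x::'a)"
  obtains C where "\<And>p::'a. decseq_nhds_base (C p) p"
proof -
  have "\<forall>p::'a. \<exists>C. decseq_nhds_base C p"
  proof
    fix p :: 'a
    obtain h k where "homeomorphism UNIV UNIV h k" "h x = p"
      using hom unfolding homogeneous_space_def by blast
    then show "\<exists>C. decseq_nhds_base C p"
      using decseq_nhds_base_homeomorphism_image assms(2) by metis
  qed
  then obtain C where "\<And>p::'a. decseq_nhds_base (C p) p" by metis
  then show ?thesis by (rule that)
qed

lemma decseq_nhds_base_bot: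
  fixes m :: "'a::linorder_topology"
  assumes bot: "\<And>t. m \<le> t" and lim: "d \<longlonglongrightarrow> m" and above: "\<And>n. m < d n"
  shows "decseq_nhds_base (\<lambda>n. \<Inter>i\<le>n. {..<d i}) m"
  unfolding decseq_nhds_base_def
proof (intro conjI allI impI)
  show "decseq (\<lambda>n. \<Inter>i\<le>n. {..<d i})"
    by (auto simp: decseq_def)
  fix n
  show "open (\<Inter>i\<le>n. {..<d i})" by auto
  show "m \<in> (\<Inter>i\<le>n. {..<d i})" using above by auto
next
  fix W assume W: "open W \<and> m \<in> W"
  obtain b where b: "m < b" "{m..<b} \<subseteq> W"
    using open_right[of W m "d 0"] W above by blast
  obtain n where "d n < b"
    using order_tendstoD(2)[OF lim b(1)] by (auto dest: eventually_happens)
  have "(\<Inter>i\<le>n. {..<d i}) \<subseteq> {m..<b}"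
  proof
    fix x assume "x \<in> (\<Inter>i\<le>n. {..<d i})"
    then have "x < d n" by blast
    with \<open>d n < b\<close> show "x \<in> {m..<b}" using bot[of x] by simp
  qed
  then show "\<exists>n. (\<Inter>i\<le>n. {..<d i}) \<subseteq> W" using b(2) by blast
qed

lemma compact_UNIV_strict_decseq_tendsto:
  fixes c :: "nat \<Rightarrow> 'a::linorder_topology"
  assumes cpt: "compact (UNIV :: 'a set)" and dec: "\<And>n. c (Suc n) < c n"
  obtains y where "\<And>n. y < c n" "c \<longlonglongrightarrow> y"
proof -
  have less: "i < j \<Longrightarrow> c j < c i" for i j
    by (induction j rule: less_Suc_induct) (use dec in \<open>auto intro: order.strict_trans\<close>)
  then have le: "i \<le> j \<Longrightarrow> c j \<le> c i" for i j
    by (cases "i = j") (auto intro: less_imp_le)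
  have "inj c" by (metis less linorder_neqE_nat order_less_irrefl injI)
  then obtain y where ylim: "y islimpt range c"
    using Heine_Borel_imp_Bolzano_Weierstrass[OF cpt] range_inj_infinite by blast
  have below: "y < c n" for n
  proof (rule ccontr)
    assume "\<not> y < c n"
    then have ycn: "c (Suc n) < y" using dec[of n] by auto
    define T where "T = {c (Suc n)<..} - (c ` {..n} - {y})"
    have "open T" unfolding T_def by (intro open_Diff finite_imp_closed) auto
    moreover have "y \<in> T" using ycn by (auto simp: T_def)
    ultimately obtain z where "z \<in> range c" "z \<in> T" "z \<noteq> y" using ylim by (meson islimptE)
    then obtain j where j: "c j \<in> T" "c j \<noteq> y" by blast
    show False
    proof (cases "j \<le> n")
      case True then show ?thesis using j by (auto simp: T_def)
    next
      case False then show ?thesis using j le[of "Suc n" j] by (auto simp: T_def)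
    qed
  qed
  have "c \<longlonglongrightarrow> y"
  proof (rule topological_tendstoI)
    fix S assume S: "open S" "y \<in> S"
    obtain b where b: "y < b" "{y..<b} \<subseteq> S" using open_right[OF S below[of 0]] by auto
    obtain z where "z \<in> range c" "z < b"
      using ylim b(1) by (meson islimptE lessThan_iff open_lessThan)
    then obtain j where j: "c j < b" by blast
    have "c n \<in> S" if "j \<le> n" for n
      using le[OF that] j below[of n] b(2)
      by (meson atLeastLessThan_iff less_imp_le order.strict_trans1 subsetD)
    then show "\<forall>\<^sub>F n in sequentially. c n \<in> S" by (auto intro: eventually_sequentiallyI)
  qed
  then show ?thesis using that below by blast
qed

lemma compact_homogeneous_decseq_nhds_base:
  assumes cpt: "compact (UNIV :: 'a::linorder_topology set)"
    and hom: "homogeneous_space TYPE('a)"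
  obtains B where "\<And>p::'a. decseq_nhds_base (B p) p"
proof (cases "finite (UNIV :: 'a set)")
  case True
  have "open {p}" for p :: 'a
    using True finite_imp_closed[of "- {p}"] by (simp add: closed_open)
  then have "decseq_nhds_base (\<lambda>n. {p}) p" for p :: 'a
    by (auto simp: decseq_nhds_base_def decseq_def)
  then show ?thesis by (rule that)
next
  case False
  obtain m :: 'a where m: "\<And>t. m \<le> t"
    using compact_attains_inf[OF cpt] by auto
  obtain x :: 'a where "\<not> open {x}"
    using Heine_Borel_imp_Bolzano_Weierstrass[OF cpt False] islimpt_UNIV_iff by blast
  moreover obtain h k where "homeomorphism UNIV UNIV h k" "h m = x"
    using hom unfolding homogeneous_space_def by blast
  ultimately have "\<not> open {m}"
    using homeomorphism_imp_open_map[of UNIV UNIV h k "{m}"] by auto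
  then have "m islimpt UNIV" by (simp add: islimpt_UNIV_iff)
  have dense: "\<exists>z. m < z \<and> z < w" if "m < w" for w
  proof -
    have "m \<in> {..<w}" using that by simp
    then have "\<exists>z\<in>UNIV. z \<in> {..<w} \<and> z \<noteq> m"
      using \<open>m islimpt UNIV\<close> open_lessThan unfolding islimpt_def by blast
    then obtain z where "z < w" "z \<noteq> m" by auto
    then show ?thesis using m[of z] order_le_neq_trans by blast
  qed
  have "UNIV \<noteq> {m}" using False by (metis finite.emptyI finite.insertI)
  then obtain z where "z \<noteq> m" by auto
  then have "\<exists>z. m < z" using m[of z] order_le_neq_trans by blast
  then obtain c where c: "\<And>n. m < c n" "\<And>n. c (Suc n) < c n"
    using dependent_nat_choice[of "\<lambda>_ z. m < z" "\<lambda>_ w z. z < w"] dense by metis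
  obtain y where y: "\<And>n. y < c n" "c \<longlonglongrightarrow> y"
    using compact_UNIV_strict_decseq_tendsto[of c, OF cpt c(2)] by blast
  \<comment> \<open>\<open>c\<close> approaches \<open>y\<close> strictly from above; moving \<open>y\<close> to \<open>m\<close> gives such a sequence at \<open>m\<close>\<close>
  obtain h k where hk: "homeomorphism UNIV UNIV h k" "h y = m"
    using hom unfolding homogeneous_space_def by blast
  have "(\<lambda>n. h (c n)) \<longlonglongrightarrow> m"
    using hk y(2) continuous_on_tendsto_compose[of UNIV h c y]
    by (auto simp: homeomorphism_def)
  moreover have "m < h (c n)" for n
  proof -
    have "h (c n) \<noteq> h y"
      using y(1)[of n] hk(1) by (metis homeomorphism_apply1 UNIV_I order_less_irrefl)
    then show ?thesis using hk(2) m order_le_neq_trans by metis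
  qed
  ultimately have "decseq_nhds_base (\<lambda>n. \<Inter>i\<le>n. {..<h (c i)}) m"
    by (intro decseq_nhds_base_bot m)
  then show ?thesis using homogeneous_decseq_nhds_base[OF hom] that by blast
qed

text \<open>The order-convex component of \<open>- K\<close> containing \<open>q\<close> (empty if \<open>q \<in> K\<close>).\<close>
definition gap :: "'a::linorder set \<Rightarrow> 'a \<Rightarrow> 'a set" where
  "gap K q = {z. {min q z..max q z} \<inter> K = {}}"

lemma mem_gap_iff: "z \<in> gap K q \<longleftrightarrow> (\<forall>t\<in>K. \<not> (q \<le> t \<and> t \<le> z) \<and> \<not> (z \<le> t \<and> t \<le> q))"
  by (cases "q \<le> z") (auto simp: gap_def min_def max_def dest: order_antisym)

lemma gap_self: "q \<notin> K \<Longrightarrow> q \<in> gap K q"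
  by (simp add: gap_def)

lemma gap_Int_eq_empty: "gap K q \<inter> K = {}"
  by (fastforce simp: gap_def min_def max_def)

lemma gap_sym: "z \<in> gap K q \<Longrightarrow> q \<in> gap K z"
  by (simp add: gap_def min.commute max.commute)

lemma gap_trans: "z \<in> gap K q \<Longrightarrow> w \<in> gap K z \<Longrightarrow> w \<in> gap K q"
  unfolding mem_gap_iff by (meson linear order_trans)

lemma gap_eq: "z \<in> gap K q \<Longrightarrow> gap K z = gap K q"
  using gap_trans gap_sym by blast

lemma gap_convex: "a \<in> gap K q \<Longrightarrow> b \<in> gap K q \<Longrightarrow> a \<le> z \<Longrightarrow> z \<le> b \<Longrightarrow> z \<in> gap K q"
proof -
  assume a: "a \<in> gap K q" "b \<in> gap K q" "a \<le> z" "z \<le> b"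
  then have "b \<in> gap K a" using gap_sym gap_trans by blast
  then have "z \<in> gap K a" using a(3,4) unfolding mem_gap_iff by (meson order_trans)
  then show ?thesis using a(1) gap_trans by blast
qed

lemma open_interval_nbhd:
  fixes z :: "'a::linorder_topology"
  assumes "open S" "z \<in> S"
  obtains T where "open T" "z \<in> T" "\<And>t. t \<in> T \<Longrightarrow> {min z t..max z t} \<subseteq> S"
proof -
  obtain L where L: "open L" "z \<in> L" "\<And>t. t \<in> L \<Longrightarrow> t \<le> z \<Longrightarrow> {t..z} \<subseteq> S"
  proof (cases "\<exists>y. y < z")
    case True
    then obtain b where b: "b < z" "{b<..z} \<subseteq> S" using open_left[OF assms] by blast
    show ?thesis
    proof (rule that[of "{b<..}"])
      fix t assume "t \<in> {b<..}" "t \<le> z"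
      then have "{t..z} \<subseteq> {b<..z}" by auto
      then show "{t..z} \<subseteq> S" using b(2) by blast
    qed (use b in auto)
  next
    case False
    show ?thesis
    proof (rule that[of UNIV])
      fix t assume "t \<le> z"
      with False have "t = z" by (metis le_less)
      then show "{t..z} \<subseteq> S" using assms(2) by simp
    qed auto
  qed
  obtain R where R: "open R" "z \<in> R" "\<And>t. t \<in> R \<Longrightarrow> z \<le> t \<Longrightarrow> {z..t} \<subseteq> S"
  proof (cases "\<exists>y. z < y")
    case True
    then obtain b where b: "z < b" "{z..<b} \<subseteq> S" using open_right[OF assms] by blast
    show ?thesis
    proof (rule that[of "{..<b}"])
      fix t assume "t \<in> {..<b}" "z \<le> t"
      then have "{z..t} \<subseteq> {z..<b}" by auto
      then show "{z..t} \<subseteq> S" using b(2) by blast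
    qed (use b in auto)
  next
    case False
    show ?thesis
    proof (rule that[of UNIV])
      fix t assume "z \<le> t"
      with False have "t = z" by (metis le_less)
      then show "{z..t} \<subseteq> S" using assms(2) by simp
    qed auto
  qed
  show ?thesis
  proof (rule that[of "L \<inter> R"])
    fix t assume "t \<in> L \<inter> R"
    then show "{min z t..max z t} \<subseteq> S"
      using L(3)[of t] R(3)[of t] by (cases "t \<le> z") (auto simp: min_def max_def)
  qed (use L R in auto)
qed

lemma open_gap:
  fixes K :: "'a::linorder_topology set"
  assumes "closed K"
  shows "open (gap K q)"
proof (subst open_subopen, intro ballI)
  fix z assume z: "z \<in> gap K q"
  then have "z \<in> - K" using gap_Int_eq_empty by blast
  then obtain T where T: "open T" "z \<in> T" "\<And>t. t \<in> T \<Longrightarrow> {min z t..max z t} \<subseteq> - K"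
    using open_interval_nbhd assms by (metis open_Compl)
  then have "T \<subseteq> gap K z" by (auto simp: gap_def)
  then show "\<exists>T. open T \<and> z \<in> T \<and> T \<subseteq> gap K q"
    using T gap_eq[OF z] by blast
qed

lemma frontier_gap_subset:
  fixes K :: "'a::linorder_topology set"
  assumes "closed K"
  shows "frontier (gap K q) \<subseteq> K"
proof
  fix p assume p: "p \<in> frontier (gap K q)"
  show "p \<in> K"
  proof (rule ccontr)
    assume "p \<notin> K"
    then have "gap K p \<inter> gap K q \<noteq> {}"
      using p open_gap[OF assms] gap_self[of p K] open_Int_closure_eq_empty[of "gap K p" "gap K q"]
      by (auto simp: frontier_def)
    then have "gap K p = gap K q" using gap_eq by blast
    then show False
      using p \<open>p \<notin> K\<close> gap_self[of p K] open_gap[OF assms]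
      by (simp add: frontier_def interior_open)
  qed
qed

lemma finite_closure_diff_convex:
  fixes G :: "'a::linorder_topology set"
  assumes convex: "\<And>a b z. a \<in> G \<Longrightarrow> b \<in> G \<Longrightarrow> a \<le> z \<Longrightarrow> z \<le> b \<Longrightarrow> z \<in> G"
  shows "finite (closure G - G)"
proof -
  define L where "L = {z \<in> closure G. \<forall>g\<in>G. z < g}"
  define U where "U = {z \<in> closure G. \<forall>g\<in>G. g < z}"
  have "closure G - G \<subseteq> L \<union> U"
  proof
    fix z assume z: "z \<in> closure G - G"
    show "z \<in> L \<union> U"
    proof (rule ccontr)
      assume "z \<notin> L \<union> U"
      then obtain a b where "a \<in> G" "b \<in> G" "a \<le> z" "z \<le> b"
        using z by (auto simp: L_def U_def not_less)
      then show False using convex z by blast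
    qed
  qed
  moreover have "\<exists>a. L \<subseteq> {a}"
  proof -
    have "z \<le> w" if "z \<in> L" "w \<in> L" for z w
    proof (rule ccontr)
      assume "\<not> z \<le> w"
      moreover have "{..<z} \<inter> G = {}" using that(1) by (auto simp: L_def)
      ultimately show False
        using that(2) open_Int_closure_eq_empty[of "{..<z}" G] by (auto simp: L_def not_le)
    qed
    then show ?thesis unfolding subset_singleton_iff_Uniq Uniq_def by (blast intro: order.antisym)
  qed
  moreover have "\<exists>a. U \<subseteq> {a}"
  proof -
    have "w \<le> z" if "z \<in> U" "w \<in> U" for z w
    proof (rule ccontr)
      assume "\<not> w \<le> z"
      moreover have "{z<..} \<inter> G = {}" using that(1) by (auto simp: U_def)
      ultimately show False
        using that(2) open_Int_closure_eq_empty[of "{z<..}" G] by (auto simp: U_def not_le)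
    qed
    then show ?thesis unfolding subset_singleton_iff_Uniq Uniq_def by (blast intro: order.antisym)
  qed
  ultimately obtain a b where "closure G - G \<subseteq> {a, b}" by blast
  then show ?thesis by (rule finite_subset) simp
qed

lemma finite_frontier_gap:
  fixes K :: "'a::linorder_topology set"
  assumes "closed K"
  shows "finite (frontier (gap K q))"
proof -
  have "finite (closure (gap K q) - gap K q)"
    by (rule finite_closure_diff_convex) (rule gap_convex)
  then show ?thesis using open_gap[OF assms] by (simp add: frontier_def interior_open)
qed

definition gaps :: "'a::linorder set \<Rightarrow> 'a set set" where
  "gaps K = gap K ` (- K)"

definition trimmed_closure :: "('a::topological_space \<Rightarrow> nat \<Rightarrow> 'a set) \<Rightarrow> 'a set \<Rightarrow> nat \<Rightarrow> 'a set" where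
  "trimmed_closure B G n = closure G - (\<Union>p\<in>frontier G. B p n)"

definition gap_nbhd :: "('a::topological_space \<Rightarrow> nat \<Rightarrow> 'a set) \<Rightarrow> 'a set set \<Rightarrow> nat \<Rightarrow> 'a set" where
  "gap_nbhd B \<G> n = - (\<Union>G\<in>\<G>. trimmed_closure B G n)"

lemma gaps_Int_eq_empty: "G \<in> gaps K \<Longrightarrow> G \<inter> K = {}"
  using gap_Int_eq_empty by (auto simp: gaps_def)

lemma open_gaps: "closed K \<Longrightarrow> G \<in> gaps K \<Longrightarrow> open G"
  for K :: "'a::linorder_topology set"
  using open_gap by (auto simp: gaps_def)

lemma frontier_gaps_subset: "closed K \<Longrightarrow> G \<in> gaps K \<Longrightarrow> frontier G \<subseteq> K"
  for K :: "'a::linorder_topology set"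
  using frontier_gap_subset by (auto simp: gaps_def)

lemma finite_frontier_gaps: "closed K \<Longrightarrow> G \<in> gaps K \<Longrightarrow> finite (frontier G)"
  for K :: "'a::linorder_topology set"
  using finite_frontier_gap by (auto simp: gaps_def)

lemma gaps_eqI: "G \<in> gaps K \<Longrightarrow> G' \<in> gaps K \<Longrightarrow> x \<in> G \<Longrightarrow> x \<in> G' \<Longrightarrow> G = G'"
  unfolding gaps_def using gap_eq by blast

lemma Union_gaps: "\<Union>(gaps K) = - K"
  using gap_self gaps_Int_eq_empty by (auto simp: gaps_def) blast

lemma trimmed_closure_subset:
  assumes "\<And>p. p \<in> B p n"
  shows "trimmed_closure B G n \<subseteq> G"
  using assms interior_subset by (fastforce simp: trimmed_closure_def frontier_def)

lemma closed_trimmed_closure: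
  assumes "\<And>p. open (B p n)"
  shows "closed (trimmed_closure B G n)"
  unfolding trimmed_closure_def using assms by (intro closed_Diff open_UN) auto

lemma trimmed_closure_mono:
  assumes "\<And>p. decseq (B p)" "n \<le> m"
  shows "trimmed_closure B G n \<subseteq> trimmed_closure B G m"
  using assms unfolding trimmed_closure_def decseq_def by blast

lemma open_gap_nbhd:
  assumes "finite \<G>" "\<And>p. open (B p n)"
  shows "open (gap_nbhd B \<G> n)"
  unfolding gap_nbhd_def using assms closed_trimmed_closure by (intro open_Compl closed_UN) auto

lemma subset_gap_nbhd:
  fixes K :: "'a::linorder_topology set"
  assumes "closed K" "\<G> \<subseteq> gaps K" "\<And>p. p \<in> B p n"
  shows "K \<subseteq> gap_nbhd B \<G> n"
proof
  fix z assume "z \<in> K"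
  have "z \<notin> trimmed_closure B G n" if "G \<in> \<G>" for G
  proof
    assume "z \<in> trimmed_closure B G n"
    moreover have "open G" "z \<notin> G"
      using that assms(1,2) open_gaps gaps_Int_eq_empty[of G K] \<open>z \<in> K\<close> by auto
    ultimately show False
      using assms(3)[of z] by (auto simp: trimmed_closure_def frontier_def interior_open)
  qed
  then show "z \<in> gap_nbhd B \<G> n" by (auto simp: gap_nbhd_def)
qed

lemma gap_nbhd_subset_open:
  fixes K :: "'a::linorder_topology set"
  assumes cpt: "compact (UNIV :: 'a set)" and "closed K"
    and B: "\<And>p. decseq_nhds_base (B p) p"
    and W: "open W" "K \<subseteq> W"
  obtains \<G> n where "finite \<G>" "\<G> \<subseteq> gaps K" "gap_nbhd B \<G> n \<subseteq> W"
proof -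
  have "compact (- W)"
    using compact_Int_closed[OF cpt, of "- W"] W(1) by (simp add: closed_Compl)
  moreover have "- W \<subseteq> \<Union>(gaps K)" using W(2) Union_gaps by blast
  ultimately obtain \<G> where \<G>: "\<G> \<subseteq> gaps K" "finite \<G>" "- W \<subseteq> \<Union>\<G>"
    using open_gaps[OF \<open>closed K\<close>] by (metis compactE)
  define P where "P = (\<Union>G\<in>\<G>. frontier G)"
  have "finite P"
    using \<G> finite_frontier_gaps[OF \<open>closed K\<close>] by (auto simp: P_def)
  have "P \<subseteq> W"
    using \<G> frontier_gaps_subset[OF \<open>closed K\<close>] W(2) unfolding P_def by blast
  then have "\<forall>p\<in>P. \<exists>n. B p n \<subseteq> W" using decseq_nhds_baseD(4)[OF B W(1)] by blast
  then obtain N where N: "\<And>p. p \<in> P \<Longrightarrow> B p (N p) \<subseteq> W" by metis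
  define n where "n = Max (N ` P)"
  have small: "B p n \<subseteq> W" if "p \<in> P" for p
  proof -
    have "N p \<le> n" using \<open>finite P\<close> that by (simp add: n_def)
    then show ?thesis using decseq_nhds_baseD(1)[OF B, of p] N[OF that] by (auto simp: decseq_def)
  qed
  have "gap_nbhd B \<G> n \<subseteq> W"
  proof
    fix x assume x: "x \<in> gap_nbhd B \<G> n"
    show "x \<in> W"
    proof (rule ccontr)
      assume "x \<notin> W"
      then obtain G where G: "G \<in> \<G>" "x \<in> G" using \<G>(3) by blast
      have "x \<notin> B p n" if "p \<in> frontier G" for p
        using that G(1) small \<open>x \<notin> W\<close> unfolding P_def by blast
      then have "x \<in> trimmed_closure B G n"
        using G(2) closure_subset by (auto simp: trimmed_closure_def)
      then show False using x G(1) by (auto simp: gap_nbhd_def)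
    qed
  qed
  then show ?thesis using \<G> that by blast
qed

lemma gap_nbhd_subset_imp_eq:
  fixes K :: "'a::linorder_topology set"
  assumes B: "\<And>p. decseq_nhds_base (B p) p"
    and \<G>: "\<G> \<subseteq> gaps K" "\<G>' \<subseteq> gaps K"
    and sub: "gap_nbhd B \<G> n \<subseteq> gap_nbhd B \<G>' m"
  shows "gap_nbhd B \<G>' m = gap_nbhd B (\<G>' \<inter> \<G>) (min m n)"
proof -
  have in_B: "\<And>p k. p \<in> B p k" and dec: "\<And>p. decseq (B p)"
    using decseq_nhds_baseD[OF B] by simp_all
  have cover: "(\<Union>G\<in>\<G>'. trimmed_closure B G m) \<subseteq> (\<Union>G\<in>\<G>. trimmed_closure B G n)"
    using sub unfolding gap_nbhd_def by (simp only: Compl_subset_Compl_iff)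
  have shared: "G \<in> \<G> \<and> x \<in> trimmed_closure B G n"
    if "G \<in> \<G>'" "x \<in> trimmed_closure B G m" for G x
  proof -
    have "x \<in> (\<Union>G\<in>\<G>. trimmed_closure B G n)"
      using cover UN_I[of G \<G>' x "\<lambda>G. trimmed_closure B G m", OF that] by (rule subsetD)
    then obtain G'' where G'': "G'' \<in> \<G>" "x \<in> trimmed_closure B G'' n" by (rule UN_E)
    have "x \<in> G''" "x \<in> G"
      using G''(2) that(2) trimmed_closure_subset[of B n G''] trimmed_closure_subset[of B m G] in_B
      by blast+
    moreover have "G'' \<in> gaps K" "G \<in> gaps K" using \<G> G''(1) that(1) by blast+
    ultimately have "G'' = G" by (rule gaps_eqI[rotated 2])
    then show ?thesis using G'' by blast
  qed
  have "(\<Union>G\<in>\<G>'. trimmed_closure B G m) = (\<Union>G\<in>\<G>' \<inter> \<G>. trimmed_closure B G (min m n))"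
  proof (intro equalityI subsetI)
    fix x assume "x \<in> (\<Union>G\<in>\<G>'. trimmed_closure B G m)"
    then obtain G where G: "G \<in> \<G>'" "x \<in> trimmed_closure B G m" by blast
    then have "G \<in> \<G>" "x \<in> trimmed_closure B G n" using shared by blast+
    moreover have "x \<in> trimmed_closure B G (min m n)"
      using calculation(2) G(2) by (cases "m \<le> n") (simp_all add: min_def)
    ultimately show "x \<in> (\<Union>G\<in>\<G>' \<inter> \<G>. trimmed_closure B G (min m n))"
      using G(1) by blast
  next
    fix x assume "x \<in> (\<Union>G\<in>\<G>' \<inter> \<G>. trimmed_closure B G (min m n))"
    then obtain G where "G \<in> \<G>'" "x \<in> trimmed_closure B G (min m n)" by blast
    moreover have "trimmed_closure B G (min m n) \<subseteq> trimmed_closure B G m"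
      using trimmed_closure_mono[OF dec] by simp
    ultimately show "x \<in> (\<Union>G\<in>\<G>'. trimmed_closure B G m)" by blast
  qed
  then show ?thesis by (simp add: gap_nbhd_def)
qed

lemma op_like_natLeq_if_finite_supersets:
  assumes "\<And>U. U \<in> F \<Longrightarrow> finite {V \<in> F. U \<subseteq> V}"
  shows "op_like natLeq F"
  unfolding op_like_def
proof
  fix U assume "U \<in> F"
  then have "(card_of {V \<in> F. U \<subseteq> V}, natLeq) \<in> ordLess"
    using assms finite_iff_ordLess_natLeq by blast
  then show "(natLeq, card_of {V \<in> F. U \<subseteq> V}) \<notin> ordLeq"
    using not_ordLess_ordLeq by blast
qed

lemma chiNt_omega_compact:
  fixes K :: "'a::linorder_topology set" and B :: "'a \<Rightarrow> nat \<Rightarrow> 'a set"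
  assumes cpt: "compact (UNIV :: 'a set)" and "compact K"
    and B: "\<And>p. decseq_nhds_base (B p) p"
  shows "chiNt_omega K"
proof -
  have "closed K" using \<open>compact K\<close> by (rule compact_imp_closed)
  define F where "F = {gap_nbhd B \<G> n | \<G> n. finite \<G> \<and> \<G> \<subseteq> gaps K}"
  have "nbhd_base K F"
    unfolding nbhd_base_def
  proof (intro conjI ballI allI impI)
    fix U assume "U \<in> F"
    then obtain \<G> n where U: "U = gap_nbhd B \<G> n" "finite \<G>" "\<G> \<subseteq> gaps K"
      by (auto simp: F_def)
    show "open U" using open_gap_nbhd[OF U(2) decseq_nhds_baseD(2)[OF B]] U(1) by simp
    show "K \<subseteq> U"
      using subset_gap_nbhd[OF \<open>closed K\<close> U(3) decseq_nhds_baseD(3)[OF B]] U(1) by simp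
  next
    fix W assume W: "open W \<and> K \<subseteq> W"
    obtain \<G> n where "finite \<G>" "\<G> \<subseteq> gaps K" "gap_nbhd B \<G> n \<subseteq> W"
      by (rule gap_nbhd_subset_open[OF cpt \<open>closed K\<close> B conjunct1[OF W] conjunct2[OF W]])
    then show "\<exists>U\<in>F. U \<subseteq> W" unfolding F_def by blast
  qed
  moreover have "op_like natLeq F"
  proof (rule op_like_natLeq_if_finite_supersets)
    fix U assume "U \<in> F"
    then obtain \<G> n where U: "U = gap_nbhd B \<G> n" "finite \<G>" "\<G> \<subseteq> gaps K"
      by (auto simp: F_def)
    have "{V \<in> F. U \<subseteq> V} \<subseteq> (\<lambda>(\<H>, k). gap_nbhd B \<H> k) ` (Pow \<G> \<times> {..n})"
    proof
      fix V assume "V \<in> {V \<in> F. U \<subseteq> V}"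
      then obtain \<G>' m where V: "V = gap_nbhd B \<G>' m" "\<G>' \<subseteq> gaps K" "U \<subseteq> V"
        by (auto simp: F_def)
      have "V = gap_nbhd B (\<G>' \<inter> \<G>) (min m n)"
        using gap_nbhd_subset_imp_eq[OF B U(3) V(2)] U(1) V(1,3) by simp
      moreover have "(\<G>' \<inter> \<G>, min m n) \<in> Pow \<G> \<times> {..n}" by simp
      ultimately show "V \<in> (\<lambda>(\<H>, k). gap_nbhd B \<H> k) ` (Pow \<G> \<times> {..n})"
        using rev_image_eqI[of "(\<G>' \<inter> \<G>, min m n)" _ V "\<lambda>(\<H>, k). gap_nbhd B \<H> k"] by simp
    qed
    then show "finite {V \<in> F. U \<subseteq> V}"
      by (rule finite_subset) (simp add: U(2))
  qed
  ultimately show ?thesis unfolding chiNt_omega_def by blast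
qed

theorem theorem2p32:
  assumes "compact (UNIV :: 'a::linorder_topology set)"
    and "homogeneous_space TYPE('a)"
  shows "chiK_Nt_omega TYPE('a)"
proof -
  obtain B :: "'a \<Rightarrow> nat \<Rightarrow> 'a set" where "\<And>p. decseq_nhds_base (B p) p"
    using compact_homogeneous_decseq_nhds_base[OF assms] by blast
  then show ?thesis
    unfolding chiK_Nt_omega_def using chiNt_omega_compact[OF assms(1)] by blast
qed

end
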